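(* Let $D\in\mathbb{R}^{d\times d}$ be diagonal and let $\Theta,\Delta\subset\mathbb{R}^d$ be $\ell_2$-compact, solid, orthosymmetric and quadratically convex. For $\boldsymbol{\theta}\in\Theta,\boldsymbol{\delta}\in\Delta$ one observes independent $\mathbf{x}\sim\mathcal{N}(D\boldsymbol{\theta}+\boldsymbol{\delta},I_d)$ and $\mathbf{y}\sim\mathcal{N}(\boldsymbol{\theta},I_d)$; write $r_{\boldsymbol{\theta},\boldsymbol{\delta}}(\hat{\boldsymbol{\theta}})=\mathbb{E}\|\hat{\boldsymbol{\theta}}(\mathbf{x},\mathbf{y})-\boldsymbol{\theta}\|_2^2$. Let $R_L(\Theta,\Delta,D)=\inf_{A,B\in\mathbb{R}^{d\times d}}\sup_{\boldsymbol{\theta}\in\Theta,\boldsymbol{\delta}\in\Delta}r_{\boldsymbol{\theta},\boldsymbol{\delta}}(A\mathbf{x}+B\mathbf{y})$. Then the minimax linear estimator can be taken coordinatewise: for $\mathbf{a},\mathbf{b}\in\mathbb{R}^d$ let $\hat{\boldsymbol{\theta}}_{\mathbf{a},\mathbf{b}}(\mathbf{x},\mathbf{y})_i=a_ix_i+b_iy_i$; then $$R_L(\Theta,\Delta,D)=\inf_{\mathbf{a},\mathbf{b}\in\mathbb{R}^d}\ \sup_{\boldsymbol{\theta}\in\Theta,\boldsymbol{\delta}\in\Delta}r_{\boldsymbol{\theta},\boldsymbol{\delta}}(\hat{\boldsymbol{\theta}}_{\mathbf{a},\mathbf{b}}).$$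
   Context: A set $\Theta\subset\mathbb{R}^d$ is solid and orthosymmetric if $\boldsymbol{\theta}\in\Theta$ and $|\zeta_i|\le|\theta_i|$ for all $i$ imply $\boldsymbol{\zeta}\in\Theta$. It is quadratically convex if $\{(\theta_1^2,\dots,\theta_d^2):\boldsymbol{\theta}\in\Theta\}$ is convex. *)

theory Defs
  imports "HOL-Probability.Probability"
begin

definition solid_orthosymmetric :: "(real^'n) set \<Rightarrow> bool" where
  "solid_orthosymmetric S \<longleftrightarrow>
     (\<forall>\<theta>\<in>S. \<forall>\<zeta>. (\<forall>i. \<bar>\<zeta>$i\<bar> \<le> \<bar>\<theta>$i\<bar>) \<longrightarrow> \<zeta> \<in> S)"

definition quadratically_convex :: "(real^'n) set \<Rightarrow> bool" where
  "quadratically_convex S \<longleftrightarrow> convex ((\<lambda>\<theta>. \<chi> i. (\<theta>$i)^2) ` S)"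

definition diagonal_matrix :: "real^'n^'n \<Rightarrow> bool" where
  "diagonal_matrix D \<longleftrightarrow> (\<forall>i j. i \<noteq> j \<longrightarrow> D$i$j = 0)"

text \<open>Gaussian N(mu, I_d), as a measure on coordinate functions 'n => real
  (independent standard-variance normal coordinates).\<close>
definition gauss_vec :: "real^'n \<Rightarrow> ('n::finite \<Rightarrow> real) measure" where
  "gauss_vec \<mu> = PiM UNIV (\<lambda>i. density lborel (normal_density (\<mu>$i) 1))"

definition risk :: "real^'n^'n \<Rightarrow> real^'n \<Rightarrow> real^'n
     \<Rightarrow> (real^'n \<Rightarrow> real^'n \<Rightarrow> real^'n) \<Rightarrow> ennreal" where
  "risk D \<theta> \<delta> est =
     (\<integral>\<^sup>+ p. ennreal ((norm (est (vec_lambda (fst p)) (vec_lambda (snd p)) - \<theta>))^2)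
        \<partial>(gauss_vec (D *v \<theta> + \<delta>) \<Otimes>\<^sub>M gauss_vec \<theta>))"

definition R_L :: "(real^'n) set \<Rightarrow> (real^'n) set \<Rightarrow> real^'n^'n \<Rightarrow> ennreal" where
  "R_L \<Theta> \<Delta> D = (INF A. INF B. SUP \<theta>\<in>\<Theta>. SUP \<delta>\<in>\<Delta>.
                     risk D \<theta> \<delta> (\<lambda>x y. A *v x + B *v y))"

definition coord_est :: "real^'n \<Rightarrow> real^'n \<Rightarrow> real^'n \<Rightarrow> real^'n \<Rightarrow> real^'n" where
  "coord_est a b x y = (\<chi> i. a$i * x$i + b$i * y$i)"

end

theory Submission
  imports Defs
begin

text \<open>The risk of \<open>A x + B y\<close> is its squared bias plus the squared Frobenius norms of \<open>A\<close>
  and \<open>B\<close> (the norm on \<open>real^'n^'n\<close>). Passing to the diagonals of \<open>A\<close> and \<open>B\<close> can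
  only shrink the Frobenius norms, and the bias of the diagonal estimator at \<open>(\<theta>, \<delta>)\<close> has
  coordinates \<open>c\<^sub>i\<^sub>i\<close>, where \<open>c\<^sub>i\<^sub>j\<close> is the contribution of coordinate \<open>j\<close> of
  \<open>(\<theta>, \<delta>)\<close> to the \<open>i\<close>-th bias of \<open>A x + B y\<close>. Flipping the signs of the coordinates
  of \<open>\<theta>\<close> and \<open>\<delta>\<close> by \<open>s \<in> {-1, 1}\<^sup>d\<close> keeps them in \<open>\<Theta>\<close> and \<open>\<Delta>\<close> by solidity
  and turns that bias into \<open>(\<Sum>\<^sub>j s\<^sub>j c\<^sub>i\<^sub>j)\<^sub>i\<close>. Choosing the signs one column at a
  time so that each new cross term is nonnegative gives an \<open>s\<close> making its squared norm at
  least \<open>\<Sum>\<^sub>i\<^sub>j c\<^sub>i\<^sub>j\<^sup>2 \<ge> \<Sum>\<^sub>i c\<^sub>i\<^sub>i\<^sup>2\<close>, so the worst-case risk of the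
  diagonal estimator is at most that of \<open>A x + B y\<close>.\<close>

lemma nn_integral_normal_affine_sq:
  "(\<integral>\<^sup>+ y. ennreal ((c + e * y)\<^sup>2) \<partial>density lborel (normal_density m 1))
     = ennreal ((c + e * m)\<^sup>2 + e\<^sup>2)"
proof -
  have mass: "has_bochner_integral lborel (normal_density m 1) 1"
    using normal_moment_even[where \<sigma>=1 and k=0 and \<mu>=m] by simp
  have mean: "has_bochner_integral lborel (\<lambda>x. normal_density m 1 x * (x - m)) 0"
    using normal_moment_odd[where \<sigma>=1 and k=0 and \<mu>=m] by simp
  have var: "has_bochner_integral lborel (\<lambda>x. normal_density m 1 x * (x - m)\<^sup>2) 1"
    using normal_moment_even[where \<sigma>=1 and k=1 and \<mu>=m] by simp
  have "has_bochner_integral lborel (\<lambda>x. (c + e * m)\<^sup>2 * normal_density m 1 x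
          + (2 * (c + e * m) * e) * (normal_density m 1 x * (x - m))
          + e\<^sup>2 * (normal_density m 1 x * (x - m)\<^sup>2))
      ((c + e * m)\<^sup>2 * 1 + (2 * (c + e * m) * e) * 0 + e\<^sup>2 * 1)"
    by (intro has_bochner_integral_add has_bochner_integral_mult_right mass mean var)
  then have "has_bochner_integral lborel
      (\<lambda>x. normal_density m 1 x * (c + e * x)\<^sup>2) ((c + e * m)\<^sup>2 + e\<^sup>2)"
    by (rule has_bochner_integral_cong[THEN iffD1, rotated -1])
      (auto simp: power2_eq_square algebra_simps)
  then show ?thesis
    by (subst nn_integral_density)
      (auto simp: ennreal_mult'[symmetric] has_bochner_integral_iff nn_integral_eq_integral)
qed

lemma prob_space_normal_density_1: "prob_space (density lborel (normal_density m 1))"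
  by (rule prob_space_normal_density) simp

lemma nn_integral_PiM_normal_affine_sq:
  fixes \<mu> a :: "'i \<Rightarrow> real"
  assumes "finite I"
  shows "(\<integral>\<^sup>+ x. ennreal ((t + (\<Sum>j\<in>I. a j * x j))\<^sup>2)
            \<partial>PiM I (\<lambda>j. density lborel (normal_density (\<mu> j) 1)))
       = ennreal ((t + (\<Sum>j\<in>I. a j * \<mu> j))\<^sup>2 + (\<Sum>j\<in>I. (a j)\<^sup>2))"
  using assms
proof (induction I arbitrary: t rule: finite_induct)
  case empty
  interpret prob_space "PiM {} (\<lambda>j. density lborel (normal_density (\<mu> j) 1))"
    by (intro prob_space_PiM prob_space_normal_density_1)
  show ?case by (simp add: emeasure_space_1)
next
  case (insert i I)
  let ?N = "\<lambda>j. density lborel (normal_density (\<mu> j) 1)"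
  interpret product_prob_space ?N
    by (simp add: product_prob_space_def product_prob_space_axioms_def product_sigma_finite_def
        prob_space_normal_density_1 prob_space_imp_sigma_finite)
  interpret NI: prob_space "PiM I ?N"
    by (intro prob_space_PiM prob_space_normal_density_1)
  have "(\<integral>\<^sup>+ x. ennreal ((t + (\<Sum>j\<in>insert i I. a j * x j))\<^sup>2) \<partial>PiM (insert i I) ?N)
     = (\<integral>\<^sup>+ x. (\<integral>\<^sup>+ y. ennreal ((t + (\<Sum>j\<in>insert i I. a j * (x(i := y)) j))\<^sup>2) \<partial>?N i)
          \<partial>PiM I ?N)"
    using insert by (subst product_nn_integral_insert) auto
  also have "\<dots> = (\<integral>\<^sup>+ x. (\<integral>\<^sup>+ y. ennreal (((t + (\<Sum>j\<in>I. a j * x j)) + a i * y)\<^sup>2) \<partial>?N i)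
                    \<partial>PiM I ?N)"
  proof -
    have "(\<Sum>j\<in>I. a j * (x(i := y)) j) = (\<Sum>j\<in>I. a j * x j)" for x y
      using insert by (intro sum.cong) auto
    with insert show ?thesis
      by (simp add: add_ac fun_upd_same del: fun_upd_apply)
  qed
  also have "\<dots> = (\<integral>\<^sup>+ x. ennreal (((t + a i * \<mu> i) + (\<Sum>j\<in>I. a j * x j))\<^sup>2) + ennreal ((a i)\<^sup>2)
                    \<partial>PiM I ?N)"
    by (simp only: nn_integral_normal_affine_sq) (simp add: ac_simps flip: ennreal_plus)
  also have "\<dots> = (\<integral>\<^sup>+ x. ennreal (((t + a i * \<mu> i) + (\<Sum>j\<in>I. a j * x j))\<^sup>2) \<partial>PiM I ?N)
                  + ennreal ((a i)\<^sup>2)"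
    by (subst nn_integral_add) (auto simp: NI.emeasure_space_1)
  also have "\<dots> = ennreal ((t + (\<Sum>j\<in>insert i I. a j * \<mu> j))\<^sup>2 + (\<Sum>j\<in>insert i I. (a j)\<^sup>2))"
    using insert by (simp only: insert.IH) (simp add: ac_simps sum_nonneg flip: ennreal_plus)
  finally show ?case .
qed

lemma prob_space_gauss_vec: "prob_space (gauss_vec \<mu>)"
  unfolding gauss_vec_def by (intro prob_space_PiM prob_space_normal_density_1)

lemma sets_gauss_vec [measurable_cong]: "sets (gauss_vec \<mu>) = sets (PiM UNIV (\<lambda>_. borel))"
  unfolding gauss_vec_def by (intro sets_PiM_cong) auto

lemma nn_integral_gauss_vec_pair_affine_sq:
  fixes \<mu> \<nu> :: "real^'n" and a b :: "'n \<Rightarrow> real"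
  shows "(\<integral>\<^sup>+ p. ennreal ((t + (\<Sum>j\<in>UNIV. a j * fst p j) + (\<Sum>j\<in>UNIV. b j * snd p j))\<^sup>2)
            \<partial>(gauss_vec \<mu> \<Otimes>\<^sub>M gauss_vec \<nu>))
       = ennreal ((t + (\<Sum>j\<in>UNIV. a j * \<mu>$j) + (\<Sum>j\<in>UNIV. b j * \<nu>$j))\<^sup>2
                  + (\<Sum>j\<in>UNIV. (a j)\<^sup>2) + (\<Sum>j\<in>UNIV. (b j)\<^sup>2))"
proof -
  interpret G\<mu>: prob_space "gauss_vec \<mu>" by (rule prob_space_gauss_vec)
  interpret G\<nu>: prob_space "gauss_vec \<nu>" by (rule prob_space_gauss_vec)
  have affine_sq: "(\<integral>\<^sup>+ x. ennreal ((s + (\<Sum>j\<in>UNIV. c j * x j))\<^sup>2) \<partial>gauss_vec m)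
      = ennreal ((s + (\<Sum>j\<in>UNIV. c j * m$j))\<^sup>2 + (\<Sum>j\<in>UNIV. (c j)\<^sup>2))" for s c and m :: "real^'n"
    unfolding gauss_vec_def by (rule nn_integral_PiM_normal_affine_sq) simp
  have "(\<integral>\<^sup>+ p. ennreal ((t + (\<Sum>j\<in>UNIV. a j * fst p j) + (\<Sum>j\<in>UNIV. b j * snd p j))\<^sup>2)
            \<partial>(gauss_vec \<mu> \<Otimes>\<^sub>M gauss_vec \<nu>))
      = (\<integral>\<^sup>+ x. (\<integral>\<^sup>+ y. ennreal (((t + (\<Sum>j\<in>UNIV. a j * x j)) + (\<Sum>j\<in>UNIV. b j * y j))\<^sup>2)
            \<partial>gauss_vec \<nu>) \<partial>gauss_vec \<mu>)"
    by (subst G\<nu>.nn_integral_fst[symmetric]) simp_all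
  also have "\<dots> = (\<integral>\<^sup>+ x. ennreal ((t + (\<Sum>j\<in>UNIV. a j * x j) + (\<Sum>j\<in>UNIV. b j * \<nu>$j))\<^sup>2
                    + (\<Sum>j\<in>UNIV. (b j)\<^sup>2)) \<partial>gauss_vec \<mu>)"
    by (simp only: affine_sq)
  also have "\<dots> = (\<integral>\<^sup>+ x. ennreal (((t + (\<Sum>j\<in>UNIV. b j * \<nu>$j)) + (\<Sum>j\<in>UNIV. a j * x j))\<^sup>2)
                    + ennreal (\<Sum>j\<in>UNIV. (b j)\<^sup>2) \<partial>gauss_vec \<mu>)"
    by (simp add: add_ac sum_nonneg flip: ennreal_plus)
  also have "\<dots> = (\<integral>\<^sup>+ x. ennreal (((t + (\<Sum>j\<in>UNIV. b j * \<nu>$j)) + (\<Sum>j\<in>UNIV. a j * x j))\<^sup>2)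
                    \<partial>gauss_vec \<mu>) + ennreal (\<Sum>j\<in>UNIV. (b j)\<^sup>2)"
    by (subst nn_integral_add) (simp_all add: G\<mu>.emeasure_space_1)
  also have "\<dots> = ennreal ((t + (\<Sum>j\<in>UNIV. a j * \<mu>$j) + (\<Sum>j\<in>UNIV. b j * \<nu>$j))\<^sup>2
                  + (\<Sum>j\<in>UNIV. (a j)\<^sup>2) + (\<Sum>j\<in>UNIV. (b j)\<^sup>2))"
    by (simp only: affine_sq) (simp add: add_ac sum_nonneg flip: ennreal_plus)
  finally show ?thesis .
qed

lemma power2_norm_vec: "(norm v)\<^sup>2 = (\<Sum>i\<in>UNIV. (norm (v$i))\<^sup>2)"
  by (simp add: norm_vec_def L2_set_def sum_nonneg)

lemma power2_norm_matrix: "(norm (A :: real^'n^'m))\<^sup>2 = (\<Sum>i\<in>UNIV. \<Sum>j\<in>UNIV. (A$i$j)\<^sup>2)"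
  by (simp add: power2_norm_vec)

lemma risk_linear:
  fixes A B D :: "real^'n^'n"
  shows "risk D \<theta> \<delta> (\<lambda>x y. A *v x + B *v y)
       = ennreal ((norm (A *v (D *v \<theta> + \<delta>) + B *v \<theta> - \<theta>))\<^sup>2 + (norm A)\<^sup>2 + (norm B)\<^sup>2)"
proof -
  let ?P = "gauss_vec (D *v \<theta> + \<delta>) \<Otimes>\<^sub>M gauss_vec \<theta>"
  let ?row = "\<lambda>i p. - \<theta>$i + (\<Sum>j\<in>UNIV. A$i$j * fst p j) + (\<Sum>j\<in>UNIV. B$i$j * snd p j)"
  have "risk D \<theta> \<delta> (\<lambda>x y. A *v x + B *v y) = (\<integral>\<^sup>+ p. (\<Sum>i\<in>UNIV. ennreal ((?row i p)\<^sup>2)) \<partial>?P)"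
    unfolding risk_def
    by (intro nn_integral_cong)
      (simp add: power2_norm_vec matrix_vector_mult_def sum_ennreal algebra_simps)
  also have "\<dots> = (\<Sum>i\<in>UNIV. \<integral>\<^sup>+ p. ennreal ((?row i p)\<^sup>2) \<partial>?P)"
    by (intro nn_integral_sum) simp
  also have "\<dots> = (\<Sum>i\<in>UNIV. ennreal (((A *v (D *v \<theta> + \<delta>) + B *v \<theta> - \<theta>)$i)\<^sup>2
                     + (norm (A$i))\<^sup>2 + (norm (B$i))\<^sup>2))"
    by (simp only: nn_integral_gauss_vec_pair_affine_sq)
      (simp add: power2_norm_vec matrix_vector_mult_def algebra_simps)
  also have "\<dots> = ennreal ((norm (A *v (D *v \<theta> + \<delta>) + B *v \<theta> - \<theta>))\<^sup>2 + (norm A)\<^sup>2 + (norm B)\<^sup>2)"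
    by (subst sum_ennreal) (simp_all add: sum_nonneg sum.distrib power2_norm_vec)
  finally show ?thesis .
qed

lemma exists_signs_sum_power2_ge:
  fixes c :: "'i \<Rightarrow> 'j \<Rightarrow> real"
  assumes "finite J"
  shows "\<exists>s. (\<forall>j. \<bar>s j\<bar> = 1) \<and>
           (\<Sum>i\<in>I. \<Sum>j\<in>J. (c i j)\<^sup>2) \<le> (\<Sum>i\<in>I. (\<Sum>j\<in>J. s j * c i j)\<^sup>2)"
  using assms
proof (induction J rule: finite_induct)
  case empty
  show ?case by (intro exI[of _ "\<lambda>_. 1"]) simp
next
  case (insert k J)
  then obtain s where s: "\<forall>j. \<bar>s j\<bar> = 1"
    and IH: "(\<Sum>i\<in>I. \<Sum>j\<in>J. (c i j)\<^sup>2) \<le> (\<Sum>i\<in>I. (\<Sum>j\<in>J. s j * c i j)\<^sup>2)"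
    by blast
  define u where "u i = (\<Sum>j\<in>J. s j * c i j)" for i
  define \<sigma> :: real where "\<sigma> = (if 0 \<le> (\<Sum>i\<in>I. c i k * u i) then 1 else -1)"
  have cross: "0 \<le> \<sigma> * (\<Sum>i\<in>I. c i k * u i)"
    by (simp add: \<sigma>_def)
  have new_col: "(\<Sum>j\<in>insert k J. (s(k := \<sigma>)) j * c i j) = \<sigma> * c i k + u i" for i
    using insert by (auto simp: u_def intro!: sum.cong)
  have "(\<Sum>i\<in>I. \<Sum>j\<in>insert k J. (c i j)\<^sup>2) \<le> (\<Sum>i\<in>I. (c i k)\<^sup>2) + (\<Sum>i\<in>I. (u i)\<^sup>2)"
    using insert IH by (simp add: sum.distrib u_def)
  also have "\<dots> \<le> (\<Sum>i\<in>I. (\<sigma> * c i k + u i)\<^sup>2)"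
  proof -
    have "\<sigma>\<^sup>2 = 1" by (simp add: \<sigma>_def)
    then have "(\<Sum>i\<in>I. (\<sigma> * c i k + u i)\<^sup>2)
        = (\<Sum>i\<in>I. (c i k)\<^sup>2) + (\<Sum>i\<in>I. (u i)\<^sup>2) + 2 * (\<sigma> * (\<Sum>i\<in>I. c i k * u i))"
      by (simp add: power2_sum power_mult_distrib sum.distrib sum_distrib_left mult_ac)
    with cross show ?thesis by linarith
  qed
  also have "\<dots> = (\<Sum>i\<in>I. (\<Sum>j\<in>insert k J. (s(k := \<sigma>)) j * c i j)\<^sup>2)"
    by (simp only: new_col)
  finally have "(\<Sum>i\<in>I. \<Sum>j\<in>insert k J. (c i j)\<^sup>2)
      \<le> (\<Sum>i\<in>I. (\<Sum>j\<in>insert k J. (s(k := \<sigma>)) j * c i j)\<^sup>2)" .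
  moreover have "\<forall>j. \<bar>(s(k := \<sigma>)) j\<bar> = 1"
    using s by (simp add: \<sigma>_def)
  ultimately show ?case by (intro exI[of _ "s(k := \<sigma>)"] conjI)
qed

definition diag_mat :: "real^'n \<Rightarrow> real^'n^'n" where
  "diag_mat a = (\<chi> i j. if i = j then a$i else 0)"

lemma diag_mat_mult_vec: "diag_mat a *v v = (\<chi> i. a$i * v$i)"
proof -
  have "(\<Sum>j\<in>UNIV. (if i = j then a$i else 0) * v$j) = a$i * v$i" for i
    by (simp add: if_distrib[where f="\<lambda>x. x * _"] cong: if_cong)
  then show ?thesis
    by (simp add: vec_eq_iff diag_mat_def matrix_vector_mult_def)
qed

lemma diagonal_matrix_mult_vec:
  assumes "diagonal_matrix D"
  shows "D *v v = (\<chi> i. D$i$i * v$i)"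
proof -
  have "(\<Sum>j\<in>UNIV. D$i$j * v$j) = (\<Sum>j\<in>UNIV. if j = i then D$i$i * v$i else 0)" for i
    using assms by (intro sum.cong) (auto simp: diagonal_matrix_def)
  then show ?thesis
    by (simp add: vec_eq_iff matrix_vector_mult_def)
qed

lemma coord_est_eq_diag_mat: "coord_est a b = (\<lambda>x y. diag_mat a *v x + diag_mat b *v y)"
  by (simp add: fun_eq_iff vec_eq_iff coord_est_def diag_mat_mult_vec)

lemma norm_diag_mat_diagonal_le: "norm (diag_mat (\<chi> i. A$i$i)) \<le> norm (A :: real^'n^'n)"
proof -
  have "(\<Sum>j\<in>UNIV. ((diag_mat (\<chi> i. A$i$i))$i$j)\<^sup>2) = (A$i$i)\<^sup>2" for i
  proof -
    have "(\<Sum>j\<in>UNIV. ((diag_mat (\<chi> i. A$i$i))$i$j)\<^sup>2) = (\<Sum>j\<in>UNIV. if j = i then (A$i$i)\<^sup>2 else 0)"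
      by (intro sum.cong) (auto simp: diag_mat_def)
    then show ?thesis by simp
  qed
  then have "(norm (diag_mat (\<chi> i. A$i$i)))\<^sup>2 = (\<Sum>i\<in>UNIV. (A$i$i)\<^sup>2)"
    by (simp only: power2_norm_matrix)
  also have "\<dots> \<le> (norm A)\<^sup>2"
    unfolding power2_norm_matrix by (intro sum_mono member_le_sum) auto
  finally show ?thesis
    by (rule power2_le_imp_le) simp
qed

lemma solid_orthosymmetric_sign_flip:
  assumes "solid_orthosymmetric S" and "\<theta> \<in> S" and "\<forall>j. \<bar>s j\<bar> = 1"
  shows "(\<chi> j. s j * \<theta>$j) \<in> S"
  using assms unfolding solid_orthosymmetric_def by (auto simp: abs_mult)

lemma risk_coord_diagonal_le_sign_flip:
  fixes A B D :: "real^'n^'n"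
  assumes "diagonal_matrix D"
  shows "\<exists>s. (\<forall>j. \<bar>s j\<bar> = 1) \<and>
           risk D \<theta> \<delta> (coord_est (\<chi> i. A$i$i) (\<chi> i. B$i$i))
             \<le> risk D (\<chi> j. s j * \<theta>$j) (\<chi> j. s j * \<delta>$j) (\<lambda>x y. A *v x + B *v y)"
proof -
  define c where
    "c i j = A$i$j * (D$j$j * \<theta>$j + \<delta>$j) + B$i$j * \<theta>$j - (if i = j then \<theta>$j else 0)" for i j
  obtain s where s: "\<forall>j. \<bar>s j\<bar> = 1"
    and signs: "(\<Sum>i\<in>UNIV. \<Sum>j\<in>UNIV. (c i j)\<^sup>2) \<le> (\<Sum>i\<in>UNIV. (\<Sum>j\<in>UNIV. s j * c i j)\<^sup>2)"
    using exists_signs_sum_power2_ge[where J=UNIV and I=UNIV and c=c] by auto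
  define \<theta>' where "\<theta>' = (\<chi> j. s j * \<theta>$j)"
  define \<delta>' where "\<delta>' = (\<chi> j. s j * \<delta>$j)"
  note D_mult = diagonal_matrix_mult_vec[OF assms]
  have bias_diag:
    "(norm (diag_mat (\<chi> i. A$i$i) *v (D *v \<theta> + \<delta>) + diag_mat (\<chi> i. B$i$i) *v \<theta> - \<theta>))\<^sup>2
      = (\<Sum>i\<in>UNIV. (c i i)\<^sup>2)"
    unfolding power2_norm_vec by (simp add: diag_mat_mult_vec D_mult c_def)
  have "(A *v (D *v \<theta>' + \<delta>') + B *v \<theta>' - \<theta>')$i = (\<Sum>j\<in>UNIV. s j * c i j)" for i
    by (simp add: matrix_vector_mult_def[of A] matrix_vector_mult_def[of B] D_mult \<theta>'_def \<delta>'_def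
        c_def algebra_simps sum.distrib sum_subtractf sum_distrib_left if_distrib[where f="\<lambda>x. _ * x"] cong: if_cong)
  then have bias_flip: "(norm (A *v (D *v \<theta>' + \<delta>') + B *v \<theta>' - \<theta>'))\<^sup>2
      = (\<Sum>i\<in>UNIV. (\<Sum>j\<in>UNIV. s j * c i j)\<^sup>2)"
    by (simp add: power2_norm_vec)
  have "(\<Sum>i\<in>UNIV. (c i i)\<^sup>2) \<le> (\<Sum>i\<in>UNIV. \<Sum>j\<in>UNIV. (c i j)\<^sup>2)"
    by (intro sum_mono member_le_sum) auto
  with signs have "(\<Sum>i\<in>UNIV. (c i i)\<^sup>2) \<le> (\<Sum>i\<in>UNIV. (\<Sum>j\<in>UNIV. s j * c i j)\<^sup>2)"
    by linarith
  then have "(\<Sum>i\<in>UNIV. (c i i)\<^sup>2)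
        + (norm (diag_mat (\<chi> i. A$i$i)))\<^sup>2 + (norm (diag_mat (\<chi> i. B$i$i)))\<^sup>2
      \<le> (\<Sum>i\<in>UNIV. (\<Sum>j\<in>UNIV. s j * c i j)\<^sup>2) + (norm A)\<^sup>2 + (norm B)\<^sup>2"
    by (intro add_mono power_mono norm_diag_mat_diagonal_le) auto
  then have "risk D \<theta> \<delta> (coord_est (\<chi> i. A$i$i) (\<chi> i. B$i$i))
      \<le> risk D \<theta>' \<delta>' (\<lambda>x y. A *v x + B *v y)"
    unfolding coord_est_eq_diag_mat risk_linear bias_diag bias_flip by (rule ennreal_leI)
  with s show ?thesis
    unfolding \<theta>'_def \<delta>'_def by blast
qed

lemma SUP_risk_coord_diagonal_le:
  fixes A B D :: "real^'n^'n"
  assumes "diagonal_matrix D" and "solid_orthosymmetric \<Theta>" and "solid_orthosymmetric \<Delta>"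
  shows "(SUP \<theta>\<in>\<Theta>. SUP \<delta>\<in>\<Delta>. risk D \<theta> \<delta> (coord_est (\<chi> i. A$i$i) (\<chi> i. B$i$i)))
       \<le> (SUP \<theta>\<in>\<Theta>. SUP \<delta>\<in>\<Delta>. risk D \<theta> \<delta> (\<lambda>x y. A *v x + B *v y))"
proof (intro SUP_least)
  fix \<theta> \<delta> assume "\<theta> \<in> \<Theta>" "\<delta> \<in> \<Delta>"
  obtain s where s: "\<forall>j. \<bar>s j\<bar> = 1" and le:
    "risk D \<theta> \<delta> (coord_est (\<chi> i. A$i$i) (\<chi> i. B$i$i))
       \<le> risk D (\<chi> j. s j * \<theta>$j) (\<chi> j. s j * \<delta>$j) (\<lambda>x y. A *v x + B *v y)"
    using risk_coord_diagonal_le_sign_flip[OF assms(1)] by blast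
  have "(\<chi> j. s j * \<theta>$j) \<in> \<Theta>" "(\<chi> j. s j * \<delta>$j) \<in> \<Delta>"
    using assms(2,3) \<open>\<theta> \<in> \<Theta>\<close> \<open>\<delta> \<in> \<Delta>\<close> s by (auto intro: solid_orthosymmetric_sign_flip)
  with le show "risk D \<theta> \<delta> (coord_est (\<chi> i. A$i$i) (\<chi> i. B$i$i))
      \<le> (SUP \<theta>\<in>\<Theta>. SUP \<delta>\<in>\<Delta>. risk D \<theta> \<delta> (\<lambda>x y. A *v x + B *v y))"
    by (blast intro: SUP_upper2)
qed

theorem lemma3:
  fixes D :: "real^'n^'n" and \<Theta> \<Delta> :: "(real^'n) set"
  assumes "diagonal_matrix D"
    and "compact \<Theta>" and "solid_orthosymmetric \<Theta>" and "quadratically_convex \<Theta>"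
    and "compact \<Delta>" and "solid_orthosymmetric \<Delta>" and "quadratically_convex \<Delta>"
  shows "R_L \<Theta> \<Delta> D =
    (INF a. INF b. SUP \<theta>\<in>\<Theta>. SUP \<delta>\<in>\<Delta>. risk D \<theta> \<delta> (coord_est a b))"
proof (rule antisym)
  show "R_L \<Theta> \<Delta> D \<le> (INF a. INF b. SUP \<theta>\<in>\<Theta>. SUP \<delta>\<in>\<Delta>. risk D \<theta> \<delta> (coord_est a b))"
    unfolding R_L_def coord_est_eq_diag_mat
  proof (intro INF_greatest)
    fix a b :: "real^'n"
    show "(INF A. INF B. SUP \<theta>\<in>\<Theta>. SUP \<delta>\<in>\<Delta>. risk D \<theta> \<delta> (\<lambda>x y. A *v x + B *v y))
        \<le> (SUP \<theta>\<in>\<Theta>. SUP \<delta>\<in>\<Delta>. risk D \<theta> \<delta> (\<lambda>x y. diag_mat a *v x + diag_mat b *v y))"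
      by (intro INF_lower2[of "diag_mat a"] INF_lower[of "diag_mat b"]) simp_all
  qed
  show "(INF a. INF b. SUP \<theta>\<in>\<Theta>. SUP \<delta>\<in>\<Delta>. risk D \<theta> \<delta> (coord_est a b)) \<le> R_L \<Theta> \<Delta> D"
    unfolding R_L_def
    using SUP_risk_coord_diagonal_le[OF assms(1,3,6)]
    by (intro INF_greatest INF_lower2[OF UNIV_I] INF_lower2[OF UNIV_I])
qed

end
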